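(* Let $n\ge2$, let $a_1,\dots,a_n$ be real numbers, $C(t)=\sum_{j=1}^n a_j\cos jt$, $S(t)=\sum_{j=1}^n a_j\sin jt$, and suppose $S(t_1)=0$ with $t_1\in(0,\pi)$. Define $a^{(1)}_1,\dots,a^{(1)}_{n-1}$ by setting $a^{(1)}_n=a^{(1)}_{n+1}=0$ and, for $k=n,n-1,\dots,2$ (in this order), $$a^{(1)}_{k-1}=2a_k+2\cos t_1\, a^{(1)}_k-a^{(1)}_{k+1}.$$ Then $$C(\pi)=-\frac{a^{(1)}_1}{2}-(1+\cos t_1)\sum_{j=1}^{n-1}(-1)^j a^{(1)}_j .$$ *)

theory Defs
  imports "HOL-Analysis.Analysis"
begin

text \<open>Backward recursion: rev_rec n a c m is the coefficient a^(1)_(n+1-m),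
  with a^(1)_(n+1) = a^(1)_n = 0 and
  a^(1)_(k-1) = 2 a_k + 2 c a^(1)_k - a^(1)_(k+1) for k = n, ..., 2.\<close>
fun rev_rec :: "nat \<Rightarrow> (nat \<Rightarrow> real) \<Rightarrow> real \<Rightarrow> nat \<Rightarrow> real" where
  "rev_rec n a c 0 = 0"
| "rev_rec n a c (Suc 0) = 0"
| "rev_rec n a c (Suc (Suc m)) =
     2 * a (n - m) + 2 * c * rev_rec n a c (Suc m) - rev_rec n a c m"

definition a1 :: "nat \<Rightarrow> (nat \<Rightarrow> real) \<Rightarrow> real \<Rightarrow> nat \<Rightarrow> real" where
  "a1 n a t1 j = rev_rec n a (cos t1) (n + 1 - j)"

end

theory Submission
  imports Defs
begin

text \<open>Extending the backward recurrence one step to a^(1)_0 writes every coefficient as the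
  twisted second difference 2 a_k = a^(1)_(k-1) - 2 cos t1 a^(1)_k + a^(1)_(k+1). Both sin (k t)
  and cos (k t) satisfy f_(k+2) + f_k = 2 cos t f_(k+1), so summation by parts turns 2 S(t1) into
  a^(1)_0 sin t1, which forces a^(1)_0 = 0; the same summation by parts at t = pi gives C(pi).\<close>

lemma sum_by_parts_three_term_recurrence:
  fixes b f :: "nat \<Rightarrow> 'a::comm_ring_1"
  assumes rec: "\<And>k. f (k + 2) + f k = 2 * d * f (k + 1)"
  shows "(\<Sum>k=1..m. (b (k - 1) - 2 * c * b k + b (k + 1)) * f k) =
     b 0 * f 1 - b 1 * f 0 + b (m + 1) * f m - b m * f (m + 1)
     + 2 * (d - c) * (\<Sum>k=1..m. b k * f k)"
proof (induction m)
  case 0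
  then show ?case by simp
next
  case (Suc m)
  have split_last: "(\<Sum>k=1..Suc m. g k) = (\<Sum>k=1..m. g k) + g (Suc m)" for g :: "nat \<Rightarrow> 'a"
    by simp
  have f_Suc_Suc: "f (Suc (Suc m)) = 2 * d * f (Suc m) - f m"
    using rec[of m] by (simp add: algebra_simps)
  show ?case
    by (simp only: split_last Suc.IH) (simp add: f_Suc_Suc algebra_simps)
qed

lemma sin_three_term_recurrence:
  "sin (real (k + 2) * t) + sin (real k * t) = 2 * cos t * sin (real (k + 1) * t)"
proof -
  have "sin (real (k + 2) * t) = sin (real (k + 1) * t + t)"
    and "sin (real k * t) = sin (real (k + 1) * t - t)"
    by (simp_all add: algebra_simps)
  then show ?thesis by (simp add: sin_add sin_diff)
qed

lemma cos_three_term_recurrence: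
  "cos (real (k + 2) * t) + cos (real k * t) = 2 * cos t * cos (real (k + 1) * t)"
proof -
  have "cos (real (k + 2) * t) = cos (real (k + 1) * t + t)"
    and "cos (real k * t) = cos (real (k + 1) * t - t)"
    by (simp_all add: algebra_simps)
  then show ?thesis by (simp add: cos_add cos_diff)
qed

lemma a1_vanishes_at_top: "a1 n a t n = 0" "a1 n a t (Suc n) = 0"
  by (simp_all add: a1_def)

text \<open>The case k = 1 shows that index 0 of \<open>a1\<close> is the one-step extension a^(1)_0.\<close>

lemma a1_recurrence:
  assumes "1 \<le> k" "k \<le> n"
  shows "a1 n a t (k - 1) = 2 * a k + 2 * cos t * a1 n a t k - a1 n a t (k + 1)"
proof -
  have "n + 1 - (k - 1) = Suc (Suc (n - k))" "n + 1 - k = Suc (n - k)"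
    "n + 1 - (k + 1) = n - k" "n - (n - k) = k"
    using assms by simp_all
  then show ?thesis by (simp add: a1_def)
qed

lemma sum_coeff_by_parts:
  fixes f :: "nat \<Rightarrow> real"
  assumes rec: "\<And>k. f (k + 2) + f k = 2 * d * f (k + 1)"
  shows "2 * (\<Sum>k=1..n. a k * f k) =
     a1 n a t 0 * f 1 - a1 n a t 1 * f 0 + 2 * (d - cos t) * (\<Sum>k=1..n. a1 n a t k * f k)"
proof -
  have "2 * (\<Sum>k=1..n. a k * f k) = (\<Sum>k=1..n. (2 * a k) * f k)"
    by (simp add: sum_distrib_left mult.assoc)
  also have "\<dots> = (\<Sum>k=1..n. (a1 n a t (k - 1) - 2 * cos t * a1 n a t k
                                 + a1 n a t (k + 1)) * f k)"
    using a1_recurrence[of _ n a t] by (intro sum.cong) simp_all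
  also have "\<dots> = a1 n a t 0 * f 1 - a1 n a t 1 * f 0
                  + 2 * (d - cos t) * (\<Sum>k=1..n. a1 n a t k * f k)"
    using sum_by_parts_three_term_recurrence[of f d "a1 n a t" "cos t" n] rec
    by (simp add: a1_vanishes_at_top)
  finally show ?thesis .
qed

lemma a1_zero_of_sine_root:
  assumes "sin t \<noteq> 0" "(\<Sum>j=1..n. a j * sin (real j * t)) = 0"
  shows "a1 n a t 0 = 0"
  using sum_coeff_by_parts[where f = "\<lambda>k. sin (real k * t)" and d = "cos t"
        and a = a and n = n and t = t]
    sin_three_term_recurrence assms by simp

theorem corollary2:
  fixes n :: nat and a :: "nat \<Rightarrow> real" and t1 :: real
  assumes "n \<ge> 2"
    and "t1 \<in> {0<..<pi}"
    and "(\<Sum>j=1..n. a j * sin (real j * t1)) = 0"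
  shows "(\<Sum>j=1..n. a j * cos (real j * pi)) =
     - a1 n a t1 1 / 2 - (1 + cos t1) * (\<Sum>j=1..n-1. (-1) ^ j * a1 n a t1 j)"
proof -
  have "sin t1 \<noteq> 0"
    using assms(2) sin_gt_zero by fastforce
  then have a1_0: "a1 n a t1 0 = 0"
    using assms(3) by (rule a1_zero_of_sine_root)
  have "(\<Sum>k=1..n. a1 n a t1 k * (-1) ^ k) = (\<Sum>j=1..n-1. (-1) ^ j * a1 n a t1 j)"
  proof -
    have "{1..n} = insert n {1..n-1}" using assms(1) by auto
    then show ?thesis using assms(1) by (simp add: a1_vanishes_at_top mult.commute)
  qed
  moreover have "2 * (\<Sum>j=1..n. a j * cos (real j * pi)) =
      - a1 n a t1 1 + 2 * (- 1 - cos t1) * (\<Sum>k=1..n. a1 n a t1 k * (-1) ^ k)"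
    using sum_coeff_by_parts[where f = "\<lambda>k. cos (real k * pi)" and d = "-1"
        and a = a and n = n and t = t1]
      cos_three_term_recurrence[of _ pi] a1_0 by simp
  ultimately show ?thesis by (simp add: field_simps)
qed

end
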